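(* Let $Q=\langle b\rangle\ltimes_{(g,\gamma)}X$. Then $$1\times\langle\mathrm{Img}(\gamma)\rangle=A(Q)\le C(Q)=Q'=1\times\langle\mathrm{Img}(\gamma)\cup\mathrm{Img}(1-g)\rangle,$$ where $\langle S\rangle$ denotes the subgroup of $(X,+)$ generated by $S$ and $\mathrm{Img}(1-g)=\{x-g(x):x\in X\}$.
   Context: Let $(X,+)$ be an abelian group and $(g,\gamma)$ a construction pair on it: $g$ a permutation of $X$, $\gamma:X\times X\to X$ symmetric, alternating, biadditive, with (C1) $g^{-1}(g(x)+g(y))=x+y+\gamma(x,y)+g^{-1}(\gamma(x,y))+g^{-2}(\gamma(x,y))$, (C2) $\gamma(\gamma(x,y),z)=0$, (C3) $g^{-1}(\gamma(x,y))=\gamma(g(x),y)$ for all $x,y,z$. Let $\mathrm{Rad}(\gamma)=\{x:\gamma(x,y)=0\ \forall y\}$, $\mathrm{Img}(\gamma)$ the image of $\gamma$, and $r(g,\gamma)$ the least positive $r$ with $\sum_{0\le k<r}g^k(x)\in\mathrm{Rad}(\gamma)$ for all $x$ ($\infty$ if none). $I(i,j)$ is $\emptyset$ if $i=j$, $\{i,\dots,j-1\}$ if $i<j$, $\{j,\dots,i-1\}$ if $j<i$. For a cyclic group $C=\langle b\rangle$ such that (if finite) $|g|$ and $r(g,\gamma)$ divide $|C|$, $C\ltimes_{(g,\gamma)}X$ is the Moufang loop on $C\times X$ with multiplication $(b^i,x)(b^j,y)=(b^{i+j},g^{-j}(x)+y+\sum_{k\in I(i+j,-j)}g^{-k}(\gamma(x,y)))$.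 For a loop $Q$, the commutator subloop $C(Q)$ (resp. associator subloop $A(Q)$, resp. derived subloop $Q'$) is the smallest normal subloop $N$ such that $Q/N$ is commutative (resp. a group, resp. an abelian group). *)

theory Defs
  imports Main "HOL-Computational_Algebra.Group_Closure"
begin

definition biadditive :: "('a::ab_group_add \<Rightarrow> 'a \<Rightarrow> 'a) \<Rightarrow> bool" where
  "biadditive \<gamma> \<longleftrightarrow> (\<forall>x y z. \<gamma> (x + y) z = \<gamma> x z + \<gamma> y z) \<and> (\<forall>x y z. \<gamma> x (y + z) = \<gamma> x y + \<gamma> x z)"

definition construction_pair :: "('a::ab_group_add \<Rightarrow> 'a) \<Rightarrow> ('a \<Rightarrow> 'a \<Rightarrow> 'a) \<Rightarrow> bool" where
  "construction_pair g \<gamma> \<longleftrightarrow>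
     bij g \<and>
     (\<forall>x y. \<gamma> x y = \<gamma> y x) \<and>
     (\<forall>x. \<gamma> x x = 0) \<and>
     biadditive \<gamma> \<and>
     (\<forall>x y. inv g (g x + g y) = x + y + \<gamma> x y + inv g (\<gamma> x y) + inv g (inv g (\<gamma> x y))) \<and>
     (\<forall>x y z. \<gamma> (\<gamma> x y) z = 0) \<and>
     (\<forall>x y. inv g (\<gamma> x y) = \<gamma> (g x) y)"

definition Rad :: "('a::ab_group_add \<Rightarrow> 'a \<Rightarrow> 'a) \<Rightarrow> 'a set" where
  "Rad \<gamma> = {x. \<forall>y. \<gamma> x y = 0}"

definition Img :: "('a \<Rightarrow> 'a \<Rightarrow> 'a) \<Rightarrow> 'a set" where
  "Img \<gamma> = {\<gamma> x y | x y. True}"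

definition gpow :: "('a \<Rightarrow> 'a) \<Rightarrow> int \<Rightarrow> 'a \<Rightarrow> 'a" where
  "gpow g k = (if 0 \<le> k then g ^^ nat k else inv g ^^ nat (- k))"

text \<open>Order of a permutation; 0 encodes infinite order.\<close>
definition perm_order :: "('a \<Rightarrow> 'a) \<Rightarrow> nat" where
  "perm_order g = (if \<exists>m>0. g ^^ m = id then LEAST m. m > 0 \<and> g ^^ m = id else 0)"

text \<open>r(g,gamma); 0 encodes infinity.\<close>
definition r_const :: "('a::ab_group_add \<Rightarrow> 'a) \<Rightarrow> ('a \<Rightarrow> 'a \<Rightarrow> 'a) \<Rightarrow> nat" where
  "r_const g \<gamma> = (if \<exists>r>0. \<forall>x. (\<Sum>k<r. (g ^^ k) x) \<in> Rad \<gamma>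
                   then LEAST r. r > 0 \<and> (\<forall>x. (\<Sum>k<r. (g ^^ k) x) \<in> Rad \<gamma>) else 0)"

definition Iset :: "int \<Rightarrow> int \<Rightarrow> int set" where
  "Iset i j = (if i = j then {} else if i < j then {i..j - 1} else {j..i - 1})"

text \<open>The cyclic group C = <b> of order n (n = 0 means infinite cyclic); b^i is represented by
  the exponent i, with 0 \<le> i < n when n > 0 and i \<in> \<int> when n = 0. Note that (i + j) mod 0 = i + j.\<close>

definition sdp_carrier :: "nat \<Rightarrow> (int \<times> 'a) set" where
  "sdp_carrier n = (if n = 0 then UNIV else {0..<int n}) \<times> UNIV"

definition sdp_mult :: "nat \<Rightarrow> ('a::ab_group_add \<Rightarrow> 'a) \<Rightarrow> ('a \<Rightarrow> 'a \<Rightarrow> 'a)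
    \<Rightarrow> int \<times> 'a \<Rightarrow> int \<times> 'a \<Rightarrow> int \<times> 'a" where
  "sdp_mult n g \<gamma> p q = (case p of (i, x) \<Rightarrow> case q of (j, y) \<Rightarrow>
     ((i + j) mod int n,
      gpow g (- j) x + y + (\<Sum>k\<in>Iset (i + j) (- j). gpow g (- k) (\<gamma> x y))))"

definition sdp_one :: "int \<times> 'a::ab_group_add" where
  "sdp_one = (0, 0)"

definition lcoset :: "('b \<Rightarrow> 'b \<Rightarrow> 'b) \<Rightarrow> 'b \<Rightarrow> 'b set \<Rightarrow> 'b set" where
  "lcoset m x N = (\<lambda>n. m x n) ` N"

definition rcoset :: "('b \<Rightarrow> 'b \<Rightarrow> 'b) \<Rightarrow> 'b set \<Rightarrow> 'b \<Rightarrow> 'b set" where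
  "rcoset m N x = (\<lambda>n. m n x) ` N"

definition subloop :: "'b set \<Rightarrow> ('b \<Rightarrow> 'b \<Rightarrow> 'b) \<Rightarrow> 'b \<Rightarrow> 'b set \<Rightarrow> bool" where
  "subloop Q m e N \<longleftrightarrow> N \<subseteq> Q \<and> e \<in> N \<and> (\<forall>a\<in>N. \<forall>b\<in>N. m a b \<in> N) \<and>
     (\<forall>a\<in>N. \<forall>b\<in>N. \<forall>x\<in>Q. (m a x = b \<longrightarrow> x \<in> N) \<and> (m x a = b \<longrightarrow> x \<in> N))"

definition normal_subloop :: "'b set \<Rightarrow> ('b \<Rightarrow> 'b \<Rightarrow> 'b) \<Rightarrow> 'b \<Rightarrow> 'b set \<Rightarrow> bool" where
  "normal_subloop Q m e N \<longleftrightarrow> subloop Q m e N \<and>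
     (\<forall>x\<in>Q. \<forall>y\<in>Q. lcoset m x N = rcoset m N x \<and>
        (\<lambda>n. m (m n x) y) ` N = rcoset m N (m x y) \<and>
        (\<lambda>n. m y (m x n)) ` N = lcoset m (m y x) N)"

text \<open>Q/N has elements xN with (xN)(yN) = (xy)N.\<close>
definition quot_commutative :: "'b set \<Rightarrow> ('b \<Rightarrow> 'b \<Rightarrow> 'b) \<Rightarrow> 'b set \<Rightarrow> bool" where
  "quot_commutative Q m N \<longleftrightarrow> (\<forall>x\<in>Q. \<forall>y\<in>Q. lcoset m (m x y) N = lcoset m (m y x) N)"

definition quot_associative :: "'b set \<Rightarrow> ('b \<Rightarrow> 'b \<Rightarrow> 'b) \<Rightarrow> 'b set \<Rightarrow> bool" where
  "quot_associative Q m N \<longleftrightarrow>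
     (\<forall>x\<in>Q. \<forall>y\<in>Q. \<forall>z\<in>Q. lcoset m (m (m x y) z) N = lcoset m (m x (m y z)) N)"

definition is_smallest :: "('b set \<Rightarrow> bool) \<Rightarrow> 'b set \<Rightarrow> bool" where
  "is_smallest P N \<longleftrightarrow> P N \<and> (\<forall>M. P M \<longrightarrow> N \<subseteq> M)"

definition is_commutator_subloop :: "'b set \<Rightarrow> ('b \<Rightarrow> 'b \<Rightarrow> 'b) \<Rightarrow> 'b \<Rightarrow> 'b set \<Rightarrow> bool" where
  "is_commutator_subloop Q m e N \<longleftrightarrow>
     is_smallest (\<lambda>M. normal_subloop Q m e M \<and> quot_commutative Q m M) N"

definition is_associator_subloop :: "'b set \<Rightarrow> ('b \<Rightarrow> 'b \<Rightarrow> 'b) \<Rightarrow> 'b \<Rightarrow> 'b set \<Rightarrow> bool" where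
  "is_associator_subloop Q m e N \<longleftrightarrow>
     is_smallest (\<lambda>M. normal_subloop Q m e M \<and> quot_associative Q m M) N"

definition is_derived_subloop :: "'b set \<Rightarrow> ('b \<Rightarrow> 'b \<Rightarrow> 'b) \<Rightarrow> 'b \<Rightarrow> 'b set \<Rightarrow> bool" where
  "is_derived_subloop Q m e N \<longleftrightarrow>
     is_smallest (\<lambda>M. normal_subloop Q m e M \<and> quot_commutative Q m M \<and> quot_associative Q m M) N"

end

theory Submission
  imports Defs
begin

text \<open>Write \<open>R = \<langle>Img \<gamma>\<rangle>\<close> and \<open>Rcomm = \<langle>Img \<gamma> \<union> Img (1 - g)\<rangle>\<close>. By (C1)--(C3), \<open>R\<close> lies in
  the radical of \<open>\<gamma>\<close> and every integer power of \<open>g\<close> preserves \<open>R\<close>, is additive on \<open>R\<close> and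
  additive up to an error in \<open>R\<close>. For any subgroup \<open>H \<supseteq> R\<close> invariant under \<open>g\<close> this makes the left
  and right cosets of \<open>1 \<times> H\<close> both equal to \<open>{b\<^sup>i} \<times> (x + H)\<close> and compatible with the
  multiplication, so \<open>1 \<times> H\<close> is normal; the quotient is associative because all associators
  lie in \<open>1 \<times> R\<close>, and commutative as soon as \<open>Img (1 - g) \<subseteq> H\<close>.
  Conversely, the associator of \<open>(b, -(x + y))\<close>, \<open>(1, y)\<close>, \<open>(1, x)\<close> forces \<open>(1, \<gamma> x y)\<close> into every
  normal subloop with associative quotient, and comparing \<open>(b, x) (1, y)\<close> with \<open>(1, y) (b, x)\<close>
  forces \<open>(1, g\<inverse> y - y - \<gamma> x y)\<close> into every normal subloop with commutative quotient.\<close>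

lemma group_closure_subset:
  assumes "S \<subseteq> H" and "0 \<in> H" and "\<And>a b. a \<in> H \<Longrightarrow> b \<in> H \<Longrightarrow> a - b \<in> H"
  shows "group_closure S \<subseteq> H"
proof
  fix x assume "x \<in> group_closure S"
  then show "x \<in> H" by induction (use assms in auto)
qed

lemma group_closure_mono: "S \<subseteq> T \<Longrightarrow> group_closure S \<subseteq> group_closure T"
  by (rule group_closure_subset) (auto intro: group_closure.intros)

lemma group_closure_map_subset:
  assumes "\<And>s. s \<in> S \<Longrightarrow> f s \<in> group_closure T"
    and "\<And>x y. x \<in> group_closure S \<Longrightarrow> y \<in> group_closure S \<Longrightarrow>
           f (x - y) - (f x - f y) \<in> group_closure T"
  shows "f ` group_closure S \<subseteq> group_closure T"
proof clarify
  fix x assume "x \<in> group_closure S"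
  then show "f x \<in> group_closure T"
  proof induction
    case (base s)
    have "f 0 \<in> group_closure T" using assms(2)[of 0 0] by simp
    with base assms(1) show ?case by auto
  next
    case (diff s t)
    have "f s - f t \<in> group_closure T" using diff.IH by (rule group_closure.diff)
    moreover have "f (s - t) - (f s - f t) \<in> group_closure T" using diff assms(2) by blast
    ultimately have "(f s - f t) + (f (s - t) - (f s - f t)) \<in> group_closure T"
      by (rule group_closure_add)
    then show ?case by simp
  qed
qed

lemma image_Pair_Times:
  assumes "\<And>u. f (i, u) = (k, F u)"
  shows "f ` ({i} \<times> A) = {k} \<times> F ` A"
  using assms by (auto simp: image_iff)

lemma subloop_subset: "subloop Q m e M \<Longrightarrow> M \<subseteq> Q"
  unfolding subloop_def by blast

lemma subloop_one: "subloop Q m e M \<Longrightarrow> e \<in> M"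
  unfolding subloop_def by blast

lemma subloop_mult: "subloop Q m e M \<Longrightarrow> a \<in> M \<Longrightarrow> b \<in> M \<Longrightarrow> m a b \<in> M"
  unfolding subloop_def by blast

lemma subloop_left_div:
  "subloop Q m e M \<Longrightarrow> a \<in> M \<Longrightarrow> b \<in> M \<Longrightarrow> x \<in> Q \<Longrightarrow> m a x = b \<Longrightarrow> x \<in> M"
  unfolding subloop_def by blast

lemma normal_subloop_subloop: "normal_subloop Q m e M \<Longrightarrow> subloop Q m e M"
  unfolding normal_subloop_def by blast

subsection \<open>Integer powers of a permutation\<close>

lemma gpow_0 [simp]: "gpow g 0 = id"
  by (simp add: gpow_def)

lemma gpow_of_nat [simp]: "gpow g (int n) = g ^^ n"
  by (simp add: gpow_def)

lemma gpow_1 [simp]: "gpow g 1 = g"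
  by (simp add: gpow_def fun_eq_iff)

lemma gpow_minus_1 [simp]: "gpow g (- 1) = inv g"
  by (simp add: gpow_def fun_eq_iff)

lemma gpow_succ:
  assumes "bij g"
  shows "gpow g (k + 1) x = g (gpow g k x)"
proof (cases "k \<ge> 0")
  case True
  then have "nat (k + 1) = Suc (nat k)" by simp
  with True show ?thesis by (simp add: gpow_def)
next
  case False
  then have "nat (- k) = Suc (nat (- (k + 1)))" by simp
  with False assms show ?thesis by (simp add: gpow_def bij_is_surj surj_f_inv_f)
qed

lemma gpow_pred:
  assumes "bij g"
  shows "gpow g (k - 1) x = inv g (gpow g k x)"
  using gpow_succ[OF assms, of "k - 1" x] assms by (simp add: bij_is_inj)

lemma gpow_add:
  assumes "bij g"
  shows "gpow g a (gpow g b x) = gpow g (a + b) x"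
proof (induction a rule: int_induct[where k = 0])
  case base
  then show ?case by simp
next
  case (step1 i)
  then show ?case using gpow_succ[OF assms, of i] gpow_succ[OF assms, of "i + b"]
    by (simp add: algebra_simps)
next
  case (step2 i)
  then show ?case using gpow_pred[OF assms, of i] gpow_pred[OF assms, of "i + b"]
    by (simp add: algebra_simps)
qed

lemma gpow_neg_cancel:
  assumes "bij g"
  shows "gpow g (- k) (gpow g k x) = x" and "gpow g k (gpow g (- k) x) = x"
  using gpow_add[OF assms, of "- k" k x] gpow_add[OF assms, of k "- k" x] by simp_all

lemma gpow_mod:
  assumes "bij g" and "g ^^ n = id"
  shows "gpow g (k mod int n) = gpow g k"
proof -
  have gpow_n: "gpow g (int n) = id" using assms(2) by simp
  have period: "gpow g (int n * q) x = x" for q x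
  proof (induction q rule: int_induct[where k = 0])
    case base
    then show ?case by simp
  next
    case (step1 i)
    have "gpow g (int n * (i + 1)) x = gpow g (int n * i) (gpow g (int n) x)"
      using assms(1) by (simp only: gpow_add) (simp add: algebra_simps)
    with step1 gpow_n show ?case by simp
  next
    case (step2 i)
    have "gpow g (int n * (i - 1)) (gpow g (int n) x) = gpow g (int n * i) x"
      using assms(1) by (simp only: gpow_add) (simp add: algebra_simps)
    with step2 gpow_n show ?case by simp
  qed
  have "gpow g k x = gpow g (k mod int n) (gpow g (int n * (k div int n)) x)" for x
    using gpow_add[OF assms(1)] by (simp add: algebra_simps)
  with period show ?thesis by auto
qed

lemma funpow_perm_order_dvd:
  assumes "perm_order g dvd n" and "n > 0"
  shows "g ^^ n = id"
proof -
  have ex: "\<exists>m. m > 0 \<and> g ^^ m = id"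
    using assms by (auto simp: perm_order_def split: if_splits)
  then have "g ^^ perm_order g = id"
    using LeastI_ex[OF ex] by (simp add: perm_order_def)
  moreover obtain c where "n = perm_order g * c" using assms(1) ..
  ultimately show ?thesis by (simp add: funpow_mult[symmetric])
qed

lemma r_const_Rad:
  assumes "r_const g \<gamma> \<noteq> 0"
  shows "(\<Sum>k<r_const g \<gamma>. (g ^^ k) x) \<in> Rad \<gamma>"
proof -
  have ex: "\<exists>r. r > 0 \<and> (\<forall>x. (\<Sum>k<r. (g ^^ k) x) \<in> Rad \<gamma>)"
    using assms by (auto simp: r_const_def split: if_splits)
  show ?thesis
    using LeastI_ex[OF ex] ex by (simp add: r_const_def)
qed

subsection \<open>The loop \<open>C \<ltimes> X\<close>\<close>

lemma mem_sdp_carrier [simp]: "(i, x) \<in> sdp_carrier n \<longleftrightarrow> i mod int n = i"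
  by (auto simp: sdp_carrier_def zmod_trivial_iff)

lemma sdp_mult_closed: "sdp_mult n g \<gamma> p q \<in> sdp_carrier n"
  by (cases p, cases q) (simp add: sdp_mult_def)

lemma one_mod_int: "n \<noteq> 1 \<Longrightarrow> 1 mod int n = 1"
  by (cases "n = 0") auto

lemma mod_one_plus_eq_one:
  assumes "j mod int n = j" and "n \<noteq> 1" and "(1 + j) mod int n = 1"
  shows "j = 0"
proof (cases "n = 0")
  case True
  with assms show ?thesis by simp
next
  case False
  with assms(1) have j: "0 \<le> j" "j < int n" by (auto simp: zmod_trivial_iff)
  show ?thesis
  proof (cases "1 + j < int n")
    case True
    with j assms(3) show ?thesis by simp
  next
    case False
    with j have "1 + j = int n" by simp
    with assms(3) show ?thesis by simp
  qed
qed

lemma sdp_mult_zero_zero: "sdp_mult n g \<gamma> (0, a) (0, b) = (0, a + b)"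
  by (simp add: sdp_mult_def gpow_def Iset_def)

lemma sdp_mult_one_zero:
  "n \<noteq> 1 \<Longrightarrow> sdp_mult n g \<gamma> (1, p) (0, u) = (1, p + u + \<gamma> p u)"
  by (cases "n = 0") (simp_all add: sdp_mult_def gpow_def Iset_def)

lemma subloop_slice_diff:
  assumes M: "subloop (sdp_carrier n) (sdp_mult n g \<gamma>) sdp_one M"
    and a: "(0, a) \<in> M" and b: "(0, b) \<in> M"
  shows "(0, a - b) \<in> M"
proof -
  have "(0, 0) \<in> M" using subloop_one[OF M] by (simp add: sdp_one_def)
  moreover have "sdp_mult n g \<gamma> (0, b) (0, - b) = (0, 0)" by (simp add: sdp_mult_zero_zero)
  ultimately have "(0, - b) \<in> M" using subloop_left_div[OF M b] by simp
  from subloop_mult[OF M a this] show ?thesis by (simp add: sdp_mult_zero_zero)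
qed

lemma subloop_slice_group_closure:
  assumes M: "subloop (sdp_carrier n) (sdp_mult n g \<gamma>) sdp_one M"
    and S: "\<And>s. s \<in> S \<Longrightarrow> (0, s) \<in> M"
  shows "{0} \<times> group_closure S \<subseteq> M"
proof -
  have "group_closure S \<subseteq> {x. (0, x) \<in> M}"
  proof (rule group_closure_subset)
    show "0 \<in> {x. (0, x) \<in> M}" using subloop_one[OF M] by (simp add: sdp_one_def)
  qed (use S subloop_slice_diff[OF M] in auto)
  then show ?thesis by auto
qed

subsection \<open>Construction pairs\<close>

locale cpair =
  fixes g :: "'a::ab_group_add \<Rightarrow> 'a" and \<gamma> :: "'a \<Rightarrow> 'a \<Rightarrow> 'a"
  assumes construction_pair: "construction_pair g \<gamma>"
begin

lemma bij_g: "bij g"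
  using construction_pair unfolding construction_pair_def by blast

lemma inv_g_g [simp]: "inv g (g x) = x"
  using bij_g by (simp add: bij_is_inj)

lemma g_inv_g [simp]: "g (inv g x) = x"
  using bij_g by (simp add: bij_is_surj surj_f_inv_f)

lemmas gpow_neg_cancel_g [simp] = gpow_neg_cancel[OF bij_g]

lemma gamma_commute: "\<gamma> x y = \<gamma> y x"
  using construction_pair unfolding construction_pair_def by blast

lemma gamma_self [simp]: "\<gamma> x x = 0"
  using construction_pair unfolding construction_pair_def by blast

lemma gamma_add_left [simp]: "\<gamma> (x + y) z = \<gamma> x z + \<gamma> y z"
  using construction_pair unfolding construction_pair_def biadditive_def by blast

lemma gamma_add_right [simp]: "\<gamma> z (x + y) = \<gamma> z x + \<gamma> z y"
  using construction_pair unfolding construction_pair_def biadditive_def by blast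

lemma inv_g_add_g:
  "inv g (g x + g y) = x + y + \<gamma> x y + inv g (\<gamma> x y) + inv g (inv g (\<gamma> x y))"
  using construction_pair unfolding construction_pair_def by blast

lemma gamma_gamma_left [simp]: "\<gamma> (\<gamma> x y) z = 0"
  using construction_pair unfolding construction_pair_def by blast

lemma inv_g_gamma: "inv g (\<gamma> x y) = \<gamma> (g x) y"
  using construction_pair unfolding construction_pair_def by blast

lemma gamma_zero_left [simp]: "\<gamma> 0 y = 0"
  using gamma_add_left[of 0 0 y] by simp

lemma gamma_zero_right [simp]: "\<gamma> y 0 = 0"
  using gamma_add_right[of y 0 0] by simp

lemma gamma_minus_left [simp]: "\<gamma> (- x) y = - \<gamma> x y"
  using gamma_add_left[of x "- x" y] by (simp add: eq_neg_iff_add_eq_0 add.commute)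

lemma gamma_minus_right [simp]: "\<gamma> y (- x) = - \<gamma> y x"
  using gamma_add_right[of y x "- x"] by (simp add: eq_neg_iff_add_eq_0 add.commute)

lemma gamma_diff_left [simp]: "\<gamma> (x - z) y = \<gamma> x y - \<gamma> z y"
  by (simp only: diff_conv_add_uminus gamma_add_left gamma_minus_left)

lemma gamma_skew: "\<gamma> y x = - \<gamma> x y"
proof -
  have "\<gamma> (x + y) (x + y) = \<gamma> x x + \<gamma> x y + \<gamma> y x + \<gamma> y y"
    by (simp del: gamma_self add: algebra_simps)
  then have "\<gamma> x y + \<gamma> y x = 0" by simp
  then show ?thesis by (simp add: add_eq_0_iff)
qed

lemma inv_g_zero [simp]: "inv g 0 = 0"
  using inv_g_gamma[of 0 "g 0"] by simp

lemma g_zero [simp]: "g 0 = 0"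
  using g_inv_g[of 0] by simp

lemma gamma_inv_g_left: "\<gamma> (inv g x) y = g (\<gamma> x y)"
proof -
  have "\<gamma> (inv g x) y = g (inv g (\<gamma> (inv g x) y))" by simp
  also have "\<dots> = g (\<gamma> x y)" by (simp add: inv_g_gamma)
  finally show ?thesis .
qed

lemma gamma_inv_g_right: "\<gamma> x (inv g y) = g (\<gamma> x y)"
proof -
  have "\<gamma> x (inv g y) = \<gamma> (inv g y) x" by (rule gamma_commute)
  also have "\<dots> = g (\<gamma> y x)" by (rule gamma_inv_g_left)
  finally show ?thesis by (simp only: gamma_commute[of y x])
qed

lemma Rad_gamma_left [simp]: "r \<in> Rad \<gamma> \<Longrightarrow> \<gamma> r y = 0"
  by (simp add: Rad_def)

lemma Rad_gamma_right [simp]: "r \<in> Rad \<gamma> \<Longrightarrow> \<gamma> y r = 0"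
  by (subst gamma_commute) simp

lemma inv_g_Rad: "r \<in> Rad \<gamma> \<Longrightarrow> inv g r \<in> Rad \<gamma>"
  unfolding Rad_def by (simp add: gamma_inv_g_left)

lemma g_add_Rad:
  assumes "r \<in> Rad \<gamma>"
  shows "g (x + r) = g x + g r"
proof -
  have "inv g (g x + g r) = x + r" using inv_g_add_g[of x r] assms by simp
  then have "g (inv g (g x + g r)) = g (x + r)" by (rule arg_cong)
  then show ?thesis by simp
qed

lemma inv_g_add_Rad:
  assumes "r \<in> Rad \<gamma>"
  shows "inv g (x + r) = inv g x + inv g r"
  using inv_g_add_g[of "inv g x" "inv g r"] inv_g_Rad[OF assms] by simp

abbreviation R :: "'a set" where
  "R \<equiv> group_closure (Img \<gamma>)"

lemma gamma_in_R [simp]: "\<gamma> x y \<in> R"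
  by (auto simp: Img_def intro: group_closure.base)

lemma R_subset_Rad: "R \<subseteq> Rad \<gamma>"
  unfolding Rad_def by (rule group_closure_subset) (auto simp: Img_def)

lemma gamma_R_left [simp]: "r \<in> R \<Longrightarrow> \<gamma> r y = 0"
  using R_subset_Rad by auto

lemma gamma_R_right [simp]: "r \<in> R \<Longrightarrow> \<gamma> y r = 0"
  using R_subset_Rad by auto

lemma g_R: "r \<in> R \<Longrightarrow> g r \<in> R"
proof -
  have "g ` R \<subseteq> R"
  proof (rule group_closure_map_subset)
    show "g s \<in> R" if "s \<in> Img \<gamma>" for s
    proof -
      from that obtain a b where "s = \<gamma> a b" unfolding Img_def by blast
      then have "g s = \<gamma> (inv g a) b" by (simp add: gamma_inv_g_left)
      then show ?thesis by simp
    qed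
    show "g (x - y) - (g x - g y) \<in> R" if "y \<in> R" for x y
    proof -
      have "g x = g (x - y) + g y"
        using g_add_Rad[of y "x - y"] R_subset_Rad that by auto
      then show ?thesis by simp
    qed
  qed
  then show "r \<in> R \<Longrightarrow> g r \<in> R" by blast
qed

lemma inv_g_R: "r \<in> R \<Longrightarrow> inv g r \<in> R"
proof -
  have "inv g ` R \<subseteq> R"
  proof (rule group_closure_map_subset)
    show "inv g s \<in> R" if "s \<in> Img \<gamma>" for s
    proof -
      from that obtain a b where "s = \<gamma> a b" unfolding Img_def by blast
      then have "inv g s = \<gamma> (g a) b" by (simp add: inv_g_gamma)
      then show ?thesis by simp
    qed
    show "inv g (x - y) - (inv g x - inv g y) \<in> R" if "y \<in> R" for x y
    proof -
      have "inv g x = inv g (x - y) + inv g y"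
        using inv_g_add_Rad[of y "x - y"] R_subset_Rad that by auto
      then show ?thesis by simp
    qed
  qed
  then show "r \<in> R \<Longrightarrow> inv g r \<in> R" by blast
qed

lemma g_add_mod_R: "g (x + y) - g x - g y \<in> R"
proof -
  define \<delta> where "\<delta> = \<gamma> x y + inv g (\<gamma> x y) + inv g (inv g (\<gamma> x y))"
  have \<delta>: "\<delta> \<in> R"
    unfolding \<delta>_def by (intro group_closure_add inv_g_R gamma_in_R)
  have "inv g (g x + g y) = (x + y) + \<delta>"
    using inv_g_add_g[of x y] by (simp add: \<delta>_def add.assoc)
  then have "g (inv g (g x + g y)) = g ((x + y) + \<delta>)" by (rule arg_cong)
  then have "g x + g y = g ((x + y) + \<delta>)" by simp
  also have "\<dots> = g (x + y) + g \<delta>" using \<delta> R_subset_Rad by (auto intro: g_add_Rad)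
  finally have "g (x + y) - g x - g y = - g \<delta>" by (simp add: algebra_simps)
  with g_R[OF \<delta>] show ?thesis by simp
qed

lemma inv_g_add_mod_R: "inv g (x + y) - inv g x - inv g y \<in> R"
proof -
  define \<delta> where "\<delta> = \<gamma> (inv g x) (inv g y) + inv g (\<gamma> (inv g x) (inv g y))
    + inv g (inv g (\<gamma> (inv g x) (inv g y)))"
  have "\<delta> \<in> R"
    unfolding \<delta>_def by (intro group_closure_add inv_g_R gamma_in_R)
  moreover have "inv g (x + y) = inv g x + inv g y + \<delta>"
    using inv_g_add_g[of "inv g x" "inv g y"] by (simp add: \<delta>_def add.assoc)
  ultimately show ?thesis by simp
qed

definition admissible :: "('a \<Rightarrow> 'a) \<Rightarrow> bool" where
  "admissible f \<longleftrightarrow> (\<forall>r\<in>R. f r \<in> R) \<and> (\<forall>x. \<forall>r\<in>R. f (x + r) = f x + f r)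
     \<and> (\<forall>x y. f (x + y) - f x - f y \<in> R)"

lemma admissibleI:
  assumes "\<And>r. r \<in> R \<Longrightarrow> f r \<in> R" and "\<And>x r. r \<in> R \<Longrightarrow> f (x + r) = f x + f r"
    and "\<And>x y. f (x + y) - f x - f y \<in> R"
  shows "admissible f"
  unfolding admissible_def using assms by blast

lemma admissible_R: "admissible f \<Longrightarrow> r \<in> R \<Longrightarrow> f r \<in> R"
  by (simp add: admissible_def)

lemma admissible_add_R: "admissible f \<Longrightarrow> r \<in> R \<Longrightarrow> f (x + r) = f x + f r"
  by (simp add: admissible_def)

lemma admissible_add_mod_R: "admissible f \<Longrightarrow> f (x + y) - f x - f y \<in> R"
  by (simp add: admissible_def)

lemma admissible_zero: "admissible f \<Longrightarrow> f 0 = 0"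
  using admissible_add_R[of f 0 0] by simp

lemma admissible_diff_mod_R: "admissible f \<Longrightarrow> f (x - y) - (f x - f y) \<in> R"
proof -
  assume "admissible f"
  then have "f x - f (x - y) - f y \<in> R"
    using admissible_add_mod_R[of f "x - y" y] by simp
  then have "- (f x - f (x - y) - f y) \<in> R" by (simp only: group_closure_minus_iff)
  also have "- (f x - f (x - y) - f y) = f (x - y) - (f x - f y)" by (simp add: algebra_simps)
  finally show ?thesis .
qed

lemma admissible_id: "admissible id"
  by (rule admissibleI) simp_all

lemma admissible_g: "admissible g"
  using g_R g_add_Rad R_subset_Rad g_add_mod_R by (intro admissibleI) auto

lemma admissible_inv_g: "admissible (inv g)"
  using inv_g_R inv_g_add_Rad R_subset_Rad inv_g_add_mod_R by (intro admissibleI) auto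

lemma admissible_comp:
  assumes f: "admissible f" and f': "admissible f'"
  shows "admissible (f \<circ> f')"
proof (rule admissibleI)
  show "(f \<circ> f') r \<in> R" if "r \<in> R" for r
    using admissible_R[OF f admissible_R[OF f' that]] by simp
  show "(f \<circ> f') (x + r) = (f \<circ> f') x + (f \<circ> f') r" if "r \<in> R" for x r
    using admissible_add_R[OF f' that, of x] admissible_add_R[OF f admissible_R[OF f' that], of "f' x"]
    by simp
  show "(f \<circ> f') (x + y) - (f \<circ> f') x - (f \<circ> f') y \<in> R" for x y
  proof -
    define \<rho> where "\<rho> = f' (x + y) - f' x - f' y"
    have \<rho>: "\<rho> \<in> R" unfolding \<rho>_def using f' by (rule admissible_add_mod_R)
    have "f (f' (x + y)) = f (f' x + f' y) + f \<rho>"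
      using admissible_add_R[OF f \<rho>, of "f' x + f' y"] by (simp add: \<rho>_def)
    then have "f (f' (x + y)) - f (f' x) - f (f' y) = (f (f' x + f' y) - f (f' x) - f (f' y)) + f \<rho>"
      by (simp add: algebra_simps)
    also have "\<dots> \<in> R"
      using admissible_add_mod_R[OF f] admissible_R[OF f \<rho>] by (rule group_closure_add)
    finally show ?thesis by simp
  qed
qed

lemma admissible_funpow: "admissible f \<Longrightarrow> admissible (f ^^ k)"
  by (induction k) (simp_all add: admissible_id admissible_comp)

lemma admissible_gpow: "admissible (gpow g k)"
  by (simp add: gpow_def admissible_funpow admissible_g admissible_inv_g)

lemmas gpow_R = admissible_R[OF admissible_gpow]

lemmas gpow_add_R = admissible_add_R[OF admissible_gpow]

lemmas gpow_add_mod_R = admissible_add_mod_R[OF admissible_gpow]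

lemmas gpow_zero [simp] = admissible_zero[OF admissible_gpow]

lemma gpow_mod_minus:
  assumes "g ^^ n = id"
  shows "gpow g (- (k mod int n)) = gpow g (- k)"
  using gpow_mod[OF bij_g assms, of "- (k mod int n)"] gpow_mod[OF bij_g assms, of "- k"]
  by (simp add: mod_minus_eq)

abbreviation Rcomm :: "'a set" where
  "Rcomm \<equiv> group_closure (Img \<gamma> \<union> {x - g x | x. True})"

lemma R_subset_Rcomm: "R \<subseteq> Rcomm"
  by (rule group_closure_mono) auto

lemma admissible_image_Rcomm:
  assumes f: "admissible f" and fg: "\<And>x. f (g x) = g (f x)"
  shows "f ` Rcomm \<subseteq> Rcomm"
proof (rule group_closure_map_subset)
  show "f (x - y) - (f x - f y) \<in> Rcomm" for x y
    using admissible_diff_mod_R[OF f] R_subset_Rcomm by blast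
  show "f s \<in> Rcomm" if "s \<in> Img \<gamma> \<union> {x - g x | x. True}" for s
  proof (cases "s \<in> Img \<gamma>")
    case True
    then have "f s \<in> R" by (intro admissible_R[OF f] group_closure.base) simp
    then show ?thesis using R_subset_Rcomm by blast
  next
    case False
    with that obtain y where s: "s = y - g y" by auto
    have "f y - g (f y) \<in> Rcomm" by (auto intro: group_closure.base)
    moreover have "f (y - g y) - (f y - f (g y)) \<in> Rcomm"
      using admissible_diff_mod_R[OF f] R_subset_Rcomm by blast
    ultimately have "(f y - g (f y)) + (f (y - g y) - (f y - f (g y))) \<in> Rcomm"
      by (rule group_closure_add)
    then show ?thesis by (simp add: s fg)
  qed
qed

definition twist :: "int set \<Rightarrow> 'a \<Rightarrow> 'a" where
  "twist A c = (\<Sum>k\<in>A. gpow g (- k) c)"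

lemma twist_zero [simp]: "twist A 0 = 0"
  by (simp add: twist_def)

lemma twist_R: "c \<in> R \<Longrightarrow> twist A c \<in> R"
  unfolding twist_def
  by (induction A rule: infinite_finite_induct) (auto intro: group_closure_add gpow_R)

lemma twist_gamma_R [simp]: "twist A (\<gamma> x y) \<in> R"
  by (simp add: twist_R)

lemma sdp_mult_eq: "sdp_mult n g \<gamma> (i, x) (j, y) =
   ((i + j) mod int n, gpow g (- j) x + y + twist (Iset (i + j) (- j)) (\<gamma> x y))"
  by (simp add: sdp_mult_def twist_def)

lemma sdp_mult_assoc_mod_R:
  assumes "g ^^ n = id"
  defines "m \<equiv> sdp_mult n g \<gamma>"
  shows "fst (m (m (i, a) (j, b)) (l, c)) = fst (m (i, a) (m (j, b) (l, c)))"
    and "snd (m (m (i, a) (j, b)) (l, c)) - snd (m (i, a) (m (j, b) (l, c))) \<in> R"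
proof -
  show "fst (m (m (i, a) (j, b)) (l, c)) = fst (m (i, a) (m (j, b) (l, c)))"
    by (simp add: m_def sdp_mult_eq mod_add_left_eq mod_add_right_eq add.assoc)
  define t where "t = twist (Iset (i + j) (- j)) (\<gamma> a b)"
  define u where "u = gpow g (- j) a + b + t"
  define w where "w = gpow g (- l) b + c + twist (Iset (j + l) (- l)) (\<gamma> b c)"
  have gpow_u: "gpow g (- l) u = gpow g (- l) (gpow g (- j) a + b) + gpow g (- l) t"
    unfolding u_def t_def by (simp add: gpow_add_R)
  have gpow_a: "gpow g (- ((j + l) mod int n)) a = gpow g (- l) (gpow g (- j) a)"
    by (simp add: gpow_mod_minus[OF assms(1)] gpow_add[OF bij_g] add.commute)
  have "snd (m (m (i, a) (j, b)) (l, c)) - snd (m (i, a) (m (j, b) (l, c)))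
      = gpow g (- l) t
        + (gpow g (- l) (gpow g (- j) a + b) - gpow g (- l) (gpow g (- j) a) - gpow g (- l) b)
        + (twist (Iset ((i + j) mod int n + l) (- l)) (\<gamma> u c) - twist (Iset (j + l) (- l)) (\<gamma> b c)
           - twist (Iset (i + (j + l) mod int n) (- ((j + l) mod int n))) (\<gamma> a w))"
    by (simp add: m_def sdp_mult_eq gpow_u gpow_a flip: t_def u_def w_def) (simp add: w_def algebra_simps)
  also have "\<dots> \<in> R"
    unfolding t_def by (intro group_closure_add group_closure.diff gpow_add_mod_R gpow_R twist_gamma_R)
  finally show "snd (m (m (i, a) (j, b)) (l, c)) - snd (m (i, a) (m (j, b) (l, c))) \<in> R" .
qed

subsection \<open>Minimality\<close>

lemma lcoset_eq_at_one:
  assumes M: "subloop (sdp_carrier n) (sdp_mult n g \<gamma>) sdp_one M" and n: "n \<noteq> 1"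
    and eq: "lcoset (sdp_mult n g \<gamma>) (1, q) M = lcoset (sdp_mult n g \<gamma>) (1, p) M"
  obtains u where "(0, u) \<in> M" and "q = p + u + \<gamma> p u"
proof -
  have "(0, 0) \<in> M" using subloop_one[OF M] by (simp add: sdp_one_def)
  then have "sdp_mult n g \<gamma> (1, q) (0, 0) \<in> lcoset (sdp_mult n g \<gamma>) (1, q) M"
    by (simp add: lcoset_def)
  then have "(1, q) \<in> lcoset (sdp_mult n g \<gamma>) (1, p) M"
    using eq by (simp add: sdp_mult_one_zero[OF n])
  then obtain j u where ju: "(j, u) \<in> M" and prod: "sdp_mult n g \<gamma> (1, p) (j, u) = (1, q)"
    unfolding lcoset_def by auto
  have "j mod int n = j" using subloop_subset[OF M] ju by auto
  moreover have "(1 + j) mod int n = 1" using prod by (simp add: sdp_mult_eq)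
  ultimately have "j = 0" using mod_one_plus_eq_one[OF _ n] by blast
  with prod ju show thesis by (intro that[of u]) (simp_all add: sdp_mult_one_zero[OF n])
qed

lemma R_slice_subset_of_quot_associative:
  assumes n: "n \<noteq> 1" and M: "subloop (sdp_carrier n) (sdp_mult n g \<gamma>) sdp_one M"
    and A: "quot_associative (sdp_carrier n) (sdp_mult n g \<gamma>) M"
  shows "{0} \<times> R \<subseteq> M"
proof (rule subloop_slice_group_closure[OF M])
  let ?m = "sdp_mult n g \<gamma>"
  have "(0, - \<gamma> x y) \<in> M" for x y
  proof -
    have "lcoset ?m (?m (?m (1, - (x + y)) (0, y)) (0, x)) M
        = lcoset ?m (?m (1, - (x + y)) (?m (0, y) (0, x))) M"
      using A n by (simp add: quot_associative_def one_mod_int)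
    moreover have "?m (?m (1, - (x + y)) (0, y)) (0, x) = (1, - \<gamma> x y)"
      by (simp add: sdp_mult_one_zero[OF n])
    moreover have "?m (1, - (x + y)) (?m (0, y) (0, x)) = (1, 0)"
      by (simp add: sdp_mult_zero_zero sdp_mult_one_zero[OF n] add.commute gamma_skew[of x y])
    ultimately have "lcoset ?m (1, - \<gamma> x y) M = lcoset ?m (1, 0) M" by simp
    then obtain u where "(0, u) \<in> M" and "- \<gamma> x y = 0 + u + \<gamma> 0 u"
      by (rule lcoset_eq_at_one[OF M n])
    then show ?thesis by simp
  qed
  from this[of x "- y" for x y] show "(0, s) \<in> M" if "s \<in> Img \<gamma>" for s
    using that unfolding Img_def by auto
qed

lemma Iset_one_minus_one: "Iset 1 (- 1) = {- 1, 0}"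
  by (auto simp: Iset_def)

lemma Rcomm_slice_subset_of_quot_commutative:
  assumes n: "n \<noteq> 1" and M: "subloop (sdp_carrier n) (sdp_mult n g \<gamma>) sdp_one M"
    and C: "quot_commutative (sdp_carrier n) (sdp_mult n g \<gamma>) M"
  shows "{0} \<times> Rcomm \<subseteq> M"
proof (rule subloop_slice_group_closure[OF M])
  let ?m = "sdp_mult n g \<gamma>"
  have key: "(0, inv g y - y - \<gamma> x y) \<in> M" for x y
  proof -
    define p where "p = x + y + \<gamma> x y"
    define q where "q = inv g y + x + g (\<gamma> x y) + \<gamma> x y"
    have "lcoset ?m (?m (1, x) (0, y)) M = lcoset ?m (?m (0, y) (1, x)) M"
      using C n by (simp add: quot_commutative_def one_mod_int)
    moreover have "?m (1, x) (0, y) = (1, p)"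
      by (simp add: p_def sdp_mult_one_zero[OF n])
    moreover have "?m (0, y) (1, x) = (1, q)"
      by (simp add: q_def sdp_mult_eq one_mod_int[OF n] Iset_one_minus_one twist_def
          gamma_commute[of y x] algebra_simps)
    ultimately have "lcoset ?m (1, q) M = lcoset ?m (1, p) M" by simp
    then obtain u where u: "(0, u) \<in> M" and q: "q = p + u + \<gamma> p u"
      by (rule lcoset_eq_at_one[OF M n])
    have "\<gamma> p q = \<gamma> p u" using q by simp
    with q have "u = q - p - \<gamma> p q" by (simp add: algebra_simps)
    also have "\<dots> = inv g y - y - \<gamma> x y"
      by (simp add: p_def q_def gamma_inv_g_right g_R gamma_commute[of y x] algebra_simps)
    finally show ?thesis using u by simp
  qed
  have inv_g_diff: "(0, inv g y - y) \<in> M" for y using key[where x = 0 and y = y] by simp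
  show "(0, s) \<in> M" if "s \<in> Img \<gamma> \<union> {x - g x | x. True}" for s
  proof -
    have "(0, \<gamma> x y) \<in> M" for x y
      using subloop_slice_diff[OF M inv_g_diff[of y] key[where x = x and y = y]] by simp
    moreover have "(0, x - g x) \<in> M" for x
      using inv_g_diff[of "g x"] by simp
    ultimately show ?thesis using that unfolding Img_def by auto
  qed
qed

end

subsection \<open>The normal subloops \<open>1 \<times> H\<close>\<close>

locale invariant_subgroup = cpair +
  fixes H :: "'a set"
  assumes R_subset_H: "R \<subseteq> H"
    and zero_mem_H: "0 \<in> H"
    and diff_mem_H: "a \<in> H \<Longrightarrow> b \<in> H \<Longrightarrow> a - b \<in> H"
    and g_mem_H: "x \<in> H \<Longrightarrow> g x \<in> H"
    and inv_g_mem_H: "x \<in> H \<Longrightarrow> inv g x \<in> H"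
begin

lemma R_mem_H: "r \<in> R \<Longrightarrow> r \<in> H"
  using R_subset_H by blast

lemma minus_mem_H: "a \<in> H \<Longrightarrow> - a \<in> H"
  using diff_mem_H[OF zero_mem_H] by simp

lemma add_mem_H: "a \<in> H \<Longrightarrow> b \<in> H \<Longrightarrow> a + b \<in> H"
  using diff_mem_H[OF _ minus_mem_H] by (metis diff_minus_eq_add)

lemma funpow_mem_H: "(\<And>y. y \<in> H \<Longrightarrow> f y \<in> H) \<Longrightarrow> x \<in> H \<Longrightarrow> (f ^^ m) x \<in> H"
  by (induction m) auto

lemma gpow_mem_H: "x \<in> H \<Longrightarrow> gpow g k x \<in> H"
  unfolding gpow_def using funpow_mem_H g_mem_H inv_g_mem_H by auto

lemma gpow_add_mem_H:
  assumes "s \<in> H"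
  shows "gpow g k (x + s) - gpow g k x \<in> H"
proof -
  have "gpow g k (x + s) - gpow g k x = (gpow g k (x + s) - gpow g k x - gpow g k s) + gpow g k s"
    by simp
  also have "\<dots> \<in> H"
    using add_mem_H[OF R_mem_H[OF gpow_add_mod_R] gpow_mem_H[OF assms]] .
  finally show ?thesis .
qed

lemma gpow_diff_mem_H:
  assumes g_diff: "\<And>x. x - g x \<in> H"
  shows "gpow g k y - y \<in> H"
proof -
  have funpow_diff: "(f ^^ m) y - y \<in> H" if f: "\<And>x. f x - x \<in> H" for f m
  proof (induction m)
    case 0
    then show ?case by (simp add: zero_mem_H)
  next
    case (Suc m)
    have "(f ^^ Suc m) y - y = (f ((f ^^ m) y) - (f ^^ m) y) + ((f ^^ m) y - y)" by simp
    with f Suc show ?case by (metis add_mem_H)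
  qed
  have "g x - x \<in> H" for x using minus_mem_H[OF g_diff[of x]] by simp
  moreover have "inv g x - x \<in> H" for x using g_diff[of "inv g x"] by simp
  ultimately show ?thesis unfolding gpow_def using funpow_diff by simp
qed

lemma translate_eq_H:
  assumes "x - y \<in> H"
  shows "(+) x ` H = (+) y ` H"
proof -
  have sub: "(+) x ` H \<subseteq> (+) y ` H" if "x - y \<in> H" for x y
  proof clarify
    fix s assume "s \<in> H"
    then have "(x - y) + s \<in> H" using that by (rule add_mem_H[rotated])
    then show "x + s \<in> (+) y ` H" by (rule image_eqI[rotated]) simp
  qed
  have "y - x \<in> H" using minus_mem_H[OF assms] by simp
  with sub assms show ?thesis by blast
qed

text \<open>All coset computations in the loop are instances of the following lemma. The error term
  \<open>\<rho>\<close> depends on its argument only modulo \<open>R\<close>, so it can be corrected after the fact.\<close>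

lemma twisted_image_translate_H:
  assumes \<rho>_R: "\<And>u. \<rho> u \<in> R" and \<rho>_shift: "\<And>u r. r \<in> R \<Longrightarrow> \<rho> (u + r) = \<rho> u"
  shows "(\<lambda>u. gpow g k u + c + \<rho> u) ` (+) a ` H = (+) (gpow g k a + c + \<rho> a) ` H"
    (is "?F ` _ = _")
proof (intro equalityI subsetI)
  fix v assume "v \<in> ?F ` (+) a ` H"
  then obtain s where s: "s \<in> H" and v: "v = ?F (a + s)" by auto
  have "?F (a + s) = ?F a + ((gpow g k (a + s) - gpow g k a) + (\<rho> (a + s) - \<rho> a))"
    by (simp add: algebra_simps)
  moreover have "(gpow g k (a + s) - gpow g k a) + (\<rho> (a + s) - \<rho> a) \<in> H"
    using add_mem_H[OF gpow_add_mem_H[OF s] R_mem_H[OF group_closure.diff[OF \<rho>_R \<rho>_R]]] .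
  ultimately show "v \<in> (+) (?F a) ` H" unfolding v by blast
next
  fix v assume "v \<in> (+) (?F a) ` H"
  then obtain t where t: "t \<in> H" and v: "v = ?F a + t" by auto
  define s\<^sub>0 where "s\<^sub>0 = gpow g (- k) (gpow g k a + t) - a"
  define r where "r = \<rho> (a + s\<^sub>0) - \<rho> a"
  define s where "s = s\<^sub>0 + gpow g (- k) (- r)"
  have r: "r \<in> R" unfolding r_def using \<rho>_R \<rho>_R by (rule group_closure.diff)
  have r': "gpow g (- k) (- r) \<in> R" using r by (simp add: gpow_R)
  have "s\<^sub>0 \<in> H" using gpow_add_mem_H[OF t, of "- k" "gpow g k a"] by (simp add: s\<^sub>0_def)
  then have s: "s \<in> H" unfolding s_def using R_mem_H[OF r'] by (rule add_mem_H)
  have "\<rho> (a + s) = \<rho> (a + s\<^sub>0)"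
    using \<rho>_shift[OF r', of "a + s\<^sub>0"] by (simp add: s_def add.assoc)
  moreover have "gpow g k (a + s) = gpow g k a + t - r"
    using gpow_add_R[OF r', of k "a + s\<^sub>0"] by (simp add: s_def s\<^sub>0_def add.assoc)
  ultimately have "?F (a + s) = v" by (simp add: v r_def algebra_simps)
  with s show "v \<in> ?F ` (+) a ` H" by blast
qed

lemma twisted_image_H:
  assumes "\<And>u. \<rho> u \<in> R" and "\<And>u r. r \<in> R \<Longrightarrow> \<rho> (u + r) = \<rho> u"
  shows "(\<lambda>u. gpow g k u + c + \<rho> u) ` H = (+) (c + \<rho> 0) ` H"
proof -
  have "(+) 0 ` H = H" by auto
  then show ?thesis using twisted_image_translate_H[OF assms, of k c 0] by simp
qed

abbreviation N :: "(int \<times> 'a) set" where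
  "N \<equiv> {0} \<times> H"

lemma lcoset_H:
  assumes "i mod int n = i"
  shows "lcoset (sdp_mult n g \<gamma>) (i, x) N = {i} \<times> (+) x ` H"
proof -
  let ?F = "\<lambda>u. gpow g 0 u + x + twist (Iset i 0) (\<gamma> x u)"
  have "lcoset (sdp_mult n g \<gamma>) (i, x) N = {i} \<times> ?F ` H"
    unfolding lcoset_def by (rule image_Pair_Times) (simp add: sdp_mult_eq assms add.commute)
  also have "?F ` H = (+) x ` H"
    by (subst twisted_image_H) simp_all
  finally show ?thesis .
qed

lemma rcoset_H:
  assumes "i mod int n = i"
  shows "rcoset (sdp_mult n g \<gamma>) N (i, x) = {i} \<times> (+) x ` H"
proof -
  let ?F = "\<lambda>u. gpow g (- i) u + x + twist (Iset i (- i)) (\<gamma> u x)"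
  have "rcoset (sdp_mult n g \<gamma>) N (i, x) = {i} \<times> ?F ` H"
    unfolding rcoset_def by (rule image_Pair_Times) (simp add: sdp_mult_eq assms)
  also have "?F ` H = (+) x ` H"
    by (subst twisted_image_H) simp_all
  finally show ?thesis .
qed

lemma lcoset_H_eq:
  assumes "p \<in> sdp_carrier n" and "fst p = fst q" and "snd p - snd q \<in> H"
  shows "lcoset (sdp_mult n g \<gamma>) p N = lcoset (sdp_mult n g \<gamma>) q N"
  using assms by (cases p, cases q) (simp add: lcoset_H translate_eq_H)

lemma subloop_H: "subloop (sdp_carrier n) (sdp_mult n g \<gamma>) sdp_one N"
  unfolding subloop_def
proof (intro conjI ballI impI)
  show "N \<subseteq> sdp_carrier n" by auto
  show "sdp_one \<in> N" by (simp add: sdp_one_def zero_mem_H)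
next
  fix p q assume "p \<in> N" and "q \<in> N"
  then show "sdp_mult n g \<gamma> p q \<in> N" by (auto simp: sdp_mult_zero_zero add_mem_H)
next
  fix p q x :: "int \<times> 'a" assume p: "p \<in> N" and q: "q \<in> N" and x: "x \<in> sdp_carrier n"
  obtain a b j y where ab: "p = (0, a)" "q = (0, b)" "a \<in> H" "b \<in> H"
    and jy: "x = (j, y)" "j mod int n = j"
    using p q x by (cases x) auto
  show "x \<in> N" if "sdp_mult n g \<gamma> p x = q"
  proof -
    have "j = 0" using that jy by (simp add: ab sdp_mult_eq)
    with that have "a + y = b" by (simp add: ab jy sdp_mult_zero_zero)
    then have "y = b - a" by (simp add: algebra_simps)
    with \<open>j = 0\<close> show ?thesis by (simp add: jy ab diff_mem_H)
  qed
  show "x \<in> N" if "sdp_mult n g \<gamma> x p = q"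
  proof -
    have "j = 0" using that jy by (simp add: ab sdp_mult_eq)
    with that have "y + a = b" by (simp add: ab jy sdp_mult_zero_zero)
    then have "y = b - a" by (simp add: algebra_simps)
    with \<open>j = 0\<close> show ?thesis by (simp add: jy ab diff_mem_H)
  qed
qed

lemma normal_subloop_H: "normal_subloop (sdp_carrier n) (sdp_mult n g \<gamma>) sdp_one N"
  unfolding normal_subloop_def
proof (intro conjI ballI subloop_H)
  let ?m = "sdp_mult n g \<gamma>"
  fix x y :: "int \<times> 'a" assume "x \<in> sdp_carrier n" and "y \<in> sdp_carrier n"
  then obtain i a j b where x: "x = (i, a)" "i mod int n = i" and y: "y = (j, b)" "j mod int n = j"
    by (cases x, cases y) auto
  show "lcoset ?m x N = rcoset ?m N x"
    by (simp add: x lcoset_H rcoset_H)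
  let ?k = "(i + j) mod int n" and ?I = "Iset (i + j) (- j)"
  have "(\<lambda>q. ?m (?m q x) y) ` N = (\<lambda>p. ?m p y) ` rcoset ?m N x"
    by (simp add: rcoset_def image_image)
  also have "\<dots> = {?k} \<times> (\<lambda>u. gpow g (- j) u + b + twist ?I (\<gamma> u b)) ` (+) a ` H"
    by (simp add: x rcoset_H y sdp_mult_eq image_Pair_Times)
  also have "\<dots> = rcoset ?m N (?m x y)"
    by (subst twisted_image_translate_H) (simp_all add: x y sdp_mult_eq rcoset_H)
  finally show "(\<lambda>q. ?m (?m q x) y) ` N = rcoset ?m N (?m x y)" .
  let ?k' = "(j + i) mod int n" and ?I' = "Iset (j + i) (- i)"
  have "(\<lambda>q. ?m y (?m x q)) ` N = (\<lambda>p. ?m y p) ` lcoset ?m x N"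
    by (simp add: lcoset_def image_image)
  also have "\<dots> = {?k'} \<times> (\<lambda>u. gpow g 0 u + gpow g (- i) b + twist ?I' (\<gamma> b u)) ` (+) a ` H"
    by (simp add: x lcoset_H y sdp_mult_eq image_Pair_Times add.commute)
  also have "\<dots> = lcoset ?m (?m y x) N"
    by (subst twisted_image_translate_H) (simp_all add: x y sdp_mult_eq lcoset_H add.commute)
  finally show "(\<lambda>q. ?m y (?m x q)) ` N = lcoset ?m (?m y x) N" .
qed

lemma quot_associative_H:
  assumes "g ^^ n = id"
  shows "quot_associative (sdp_carrier n) (sdp_mult n g \<gamma>) N"
  unfolding quot_associative_def
proof (intro ballI)
  fix x y z :: "int \<times> 'a"
  obtain i a j b l c where xyz: "x = (i, a)" "y = (j, b)" "z = (l, c)"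
    by (cases x, cases y, cases z) auto
  show "lcoset (sdp_mult n g \<gamma>) (sdp_mult n g \<gamma> (sdp_mult n g \<gamma> x y) z) N
      = lcoset (sdp_mult n g \<gamma>) (sdp_mult n g \<gamma> x (sdp_mult n g \<gamma> y z)) N"
    unfolding xyz using sdp_mult_assoc_mod_R[OF assms]
    by (intro lcoset_H_eq sdp_mult_closed) (simp_all add: R_mem_H)
qed

lemma quot_commutative_H:
  assumes "\<And>x. x - g x \<in> H"
  shows "quot_commutative (sdp_carrier n) (sdp_mult n g \<gamma>) N"
  unfolding quot_commutative_def
proof (intro ballI)
  fix x y :: "int \<times> 'a"
  obtain i a j b where xy: "x = (i, a)" "y = (j, b)" by (cases x, cases y) auto
  have "snd (sdp_mult n g \<gamma> x y) - snd (sdp_mult n g \<gamma> y x)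
      = (gpow g (- j) a - a) - (gpow g (- i) b - b)
        + (twist (Iset (i + j) (- j)) (\<gamma> a b) - twist (Iset (j + i) (- i)) (\<gamma> b a))"
    by (simp add: xy sdp_mult_eq algebra_simps)
  also have "\<dots> \<in> H"
    using add_mem_H[OF diff_mem_H[OF gpow_diff_mem_H[OF assms] gpow_diff_mem_H[OF assms]]
        R_mem_H[OF group_closure.diff[OF twist_gamma_R twist_gamma_R]]] .
  finally show "lcoset (sdp_mult n g \<gamma>) (sdp_mult n g \<gamma> x y) N
      = lcoset (sdp_mult n g \<gamma>) (sdp_mult n g \<gamma> y x) N"
    by (intro lcoset_H_eq sdp_mult_closed) (simp_all add: xy sdp_mult_eq add.commute)
qed

end

context cpair
begin

lemma invariant_subgroup_R: "invariant_subgroup g \<gamma> R"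
  by unfold_locales (auto intro: g_R inv_g_R group_closure.diff)

lemma invariant_subgroup_Rcomm: "invariant_subgroup g \<gamma> Rcomm"
proof unfold_locales
  show "g x \<in> Rcomm" if "x \<in> Rcomm" for x
    using admissible_image_Rcomm[OF admissible_g] that by blast
  show "inv g x \<in> Rcomm" if "x \<in> Rcomm" for x
    using admissible_image_Rcomm[OF admissible_inv_g] that by force
qed (use R_subset_Rcomm in \<open>auto intro: group_closure.diff\<close>)

end

locale cpair_loop = cpair +
  fixes n :: nat
  assumes order_dvd: "n > 0 \<Longrightarrow> perm_order g dvd n \<and> r_const g \<gamma> dvd n"
begin

lemma funpow_g_n: "g ^^ n = id"
  using funpow_perm_order_dvd order_dvd by (cases "n = 0") auto

text \<open>The minimality arguments use the generator \<open>b\<close>, which does not exist for \<open>n = 1\<close>;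
  there the divisibility hypotheses make everything trivial instead.\<close>

lemma Rcomm_trivial:
  assumes "n = 1"
  shows "Rcomm = {0}"
proof -
  have "r_const g \<gamma> = 1" using order_dvd assms by simp
  then have "x \<in> Rad \<gamma>" for x using r_const_Rad[of g \<gamma> x] by simp
  then have "Img \<gamma> \<subseteq> {0}" unfolding Img_def by auto
  moreover have "g = id" using funpow_perm_order_dvd[of g 1] order_dvd assms by simp
  ultimately have "Img \<gamma> \<union> {x - g x | x. True} \<subseteq> {0}" by auto
  then have "Rcomm \<subseteq> {0}" by (rule group_closure_subset) auto
  then show ?thesis by auto
qed

lemma R_slice_minimal:
  assumes "subloop (sdp_carrier n) (sdp_mult n g \<gamma>) sdp_one M"
    and "quot_associative (sdp_carrier n) (sdp_mult n g \<gamma>) M"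
  shows "{0} \<times> R \<subseteq> M"
proof (cases "n = 1")
  case True
  then show ?thesis
    using R_subset_Rcomm Rcomm_trivial subloop_one[OF assms(1)] by (auto simp: sdp_one_def)
qed (use R_slice_subset_of_quot_associative assms in blast)

lemma Rcomm_slice_minimal:
  assumes "subloop (sdp_carrier n) (sdp_mult n g \<gamma>) sdp_one M"
    and "quot_commutative (sdp_carrier n) (sdp_mult n g \<gamma>) M"
  shows "{0} \<times> Rcomm \<subseteq> M"
proof (cases "n = 1")
  case True
  then show ?thesis
    using Rcomm_trivial subloop_one[OF assms(1)] by (auto simp: sdp_one_def)
qed (use Rcomm_slice_subset_of_quot_commutative assms in blast)

lemma associator_subloop:
  "is_associator_subloop (sdp_carrier n) (sdp_mult n g \<gamma>) sdp_one ({0} \<times> R)"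
  unfolding is_associator_subloop_def is_smallest_def
proof (intro conjI allI impI)
  show "normal_subloop (sdp_carrier n) (sdp_mult n g \<gamma>) sdp_one ({0} \<times> R)"
    by (rule invariant_subgroup.normal_subloop_H[OF invariant_subgroup_R])
  show "quot_associative (sdp_carrier n) (sdp_mult n g \<gamma>) ({0} \<times> R)"
    by (rule invariant_subgroup.quot_associative_H[OF invariant_subgroup_R funpow_g_n])
  show "{0} \<times> R \<subseteq> M"
    if "normal_subloop (sdp_carrier n) (sdp_mult n g \<gamma>) sdp_one M
      \<and> quot_associative (sdp_carrier n) (sdp_mult n g \<gamma>) M" for M
    using that R_slice_minimal[OF normal_subloop_subloop] by blast
qed

lemma commutator_subloop:
  "is_commutator_subloop (sdp_carrier n) (sdp_mult n g \<gamma>) sdp_one ({0} \<times> Rcomm)"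
  unfolding is_commutator_subloop_def is_smallest_def
proof (intro conjI allI impI)
  show "normal_subloop (sdp_carrier n) (sdp_mult n g \<gamma>) sdp_one ({0} \<times> Rcomm)"
    by (rule invariant_subgroup.normal_subloop_H[OF invariant_subgroup_Rcomm])
  show "quot_commutative (sdp_carrier n) (sdp_mult n g \<gamma>) ({0} \<times> Rcomm)"
    by (rule invariant_subgroup.quot_commutative_H[OF invariant_subgroup_Rcomm])
      (auto intro: group_closure.base)
  show "{0} \<times> Rcomm \<subseteq> M"
    if "normal_subloop (sdp_carrier n) (sdp_mult n g \<gamma>) sdp_one M
      \<and> quot_commutative (sdp_carrier n) (sdp_mult n g \<gamma>) M" for M
    using that Rcomm_slice_minimal[OF normal_subloop_subloop] by blast
qed

lemma derived_subloop:
  "is_derived_subloop (sdp_carrier n) (sdp_mult n g \<gamma>) sdp_one ({0} \<times> Rcomm)"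
  unfolding is_derived_subloop_def is_smallest_def
proof (intro conjI allI impI)
  show "normal_subloop (sdp_carrier n) (sdp_mult n g \<gamma>) sdp_one ({0} \<times> Rcomm)"
    by (rule invariant_subgroup.normal_subloop_H[OF invariant_subgroup_Rcomm])
  show "quot_commutative (sdp_carrier n) (sdp_mult n g \<gamma>) ({0} \<times> Rcomm)"
    by (rule invariant_subgroup.quot_commutative_H[OF invariant_subgroup_Rcomm])
      (auto intro: group_closure.base)
  show "quot_associative (sdp_carrier n) (sdp_mult n g \<gamma>) ({0} \<times> Rcomm)"
    by (rule invariant_subgroup.quot_associative_H[OF invariant_subgroup_Rcomm funpow_g_n])
  show "{0} \<times> Rcomm \<subseteq> M"
    if "normal_subloop (sdp_carrier n) (sdp_mult n g \<gamma>) sdp_one M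
      \<and> quot_commutative (sdp_carrier n) (sdp_mult n g \<gamma>) M
      \<and> quot_associative (sdp_carrier n) (sdp_mult n g \<gamma>) M" for M
    using that Rcomm_slice_minimal[OF normal_subloop_subloop] by blast
qed

end

theorem mainTheorem6:
  fixes g :: "'a::ab_group_add \<Rightarrow> 'a" and \<gamma> :: "'a \<Rightarrow> 'a \<Rightarrow> 'a" and n :: nat
  assumes "construction_pair g \<gamma>"
    and "n > 0 \<Longrightarrow> perm_order g dvd n \<and> r_const g \<gamma> dvd n"
  defines "Q \<equiv> sdp_carrier n" and "m \<equiv> sdp_mult n g \<gamma>"
  shows "is_associator_subloop Q m sdp_one ({0} \<times> group_closure (Img \<gamma>))
       \<and> is_commutator_subloop Q m sdp_one ({0} \<times> group_closure (Img \<gamma> \<union> {x - g x | x. True}))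
       \<and> is_derived_subloop Q m sdp_one ({0} \<times> group_closure (Img \<gamma> \<union> {x - g x | x. True}))
       \<and> {0} \<times> group_closure (Img \<gamma>) \<subseteq> {0} \<times> group_closure (Img \<gamma> \<union> {x - g x | x. True})"
proof -
  interpret cpair_loop g \<gamma> n
    using assms(1,2) by unfold_locales
  show ?thesis
    unfolding Q_def m_def
    using associator_subloop commutator_subloop derived_subloop R_subset_Rcomm by blast
qed

end
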